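(* Let $\kappa=(\xi,\eta)\in S\mathbb{H}$ and $\nu=(\alpha,\beta)\in\mathbb{H}^2$. Then $\{\kappa,\nu\}=0$ if and only if $\nu=\kappa x$ for some $x\in\mathbb{H}$.
   Context: For $q=a+bi+cj+dk\in\mathbb{H}$, $q^*=a+bi+cj-dk$, $\bar q=a-bi-cj-dk$. $\mathcal{V}=\mathrm{span}_\mathbb{R}\{1,i,j\}$. $S\mathbb{H}=\{(\xi,\eta)\in\mathbb{H}^2\setminus\{(0,0)\}:\xi\bar\eta\in\mathcal{V}\}$. The bracket of $\kappa_m=(\xi_m,\eta_m)\in\mathbb{H}^2$ is $\{\kappa_1,\kappa_2\}=\xi_1^*\eta_2-\eta_1^*\xi_2$. Right multiplication: $(\xi,\eta)x=(\xi x,\eta x)$. *)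

theory Defs
  imports Complex_Main
begin

datatype quat = Quat (qRe: real) (qI: real) (qJ: real) (qK: real)

instantiation quat :: "{zero, plus, minus, uminus, times}"
begin
definition "0 = Quat 0 0 0 0"
definition "p + q = Quat (qRe p + qRe q) (qI p + qI q) (qJ p + qJ q) (qK p + qK q)"
definition "p - q = Quat (qRe p - qRe q) (qI p - qI q) (qJ p - qJ q) (qK p - qK q)"
definition "- q = Quat (- qRe q) (- qI q) (- qJ q) (- qK q)"
text \<open>Hamilton product (i^2 = j^2 = k^2 = ijk = -1).\<close>
definition "p * q = Quat
   (qRe p * qRe q - qI p * qI q - qJ p * qJ q - qK p * qK q)
   (qRe p * qI q + qI p * qRe q + qJ p * qK q - qK p * qJ q)
   (qRe p * qJ q - qI p * qK q + qJ p * qRe q + qK p * qI q)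
   (qRe p * qK q + qI p * qJ q - qJ p * qI q + qK p * qRe q)"
instance ..
end

definition qstar :: "quat \<Rightarrow> quat" where
  "qstar q = Quat (qRe q) (qI q) (qJ q) (- qK q)"

definition qcnj :: "quat \<Rightarrow> quat" where
  "qcnj q = Quat (qRe q) (- qI q) (- qJ q) (- qK q)"

definition qV :: "quat set" where
  "qV = {q. \<exists>a b c. q = Quat a b c 0}"

definition SH :: "(quat \<times> quat) set" where
  "SH = {(\<xi>, \<eta>). (\<xi>, \<eta>) \<noteq> (0, 0) \<and> \<xi> * qcnj \<eta> \<in> qV}"

definition bracket :: "quat \<times> quat \<Rightarrow> quat \<times> quat \<Rightarrow> quat" where
  "bracket k1 k2 = qstar (fst k1) * snd k2 - qstar (snd k1) * fst k2"

definition rmult :: "quat \<times> quat \<Rightarrow> quat \<Rightarrow> quat \<times> quat" where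
  "rmult k x = (fst k * x, snd k * x)"

end

theory Submission
  imports Defs
begin

text \<open>
  Writing \<open>\<kappa> = (\<xi>, \<eta>)\<close> and \<open>\<nu> = (\<alpha>, \<beta>)\<close>, the bracket is bilinear and, by associativity,
  \<open>{\<kappa>, \<kappa> x} = {\<kappa>, \<kappa>} x\<close>; a coordinate computation shows that \<open>{\<kappa>, \<kappa>} = 0\<close>
  is exactly the condition \<open>\<xi> \<bar>\<eta> \<in> V\<close>, which gives one direction. Conversely, if
  \<open>\<xi> \<noteq> 0\<close> and \<open>{\<kappa>, \<nu>} = 0\<close>, put \<open>x = \<xi>\<inverse> \<alpha>\<close>; then
  \<open>\<xi>\<^sup>* (\<eta> x) = (\<eta>\<^sup>* \<xi>) x = \<eta>\<^sup>* \<alpha> = \<xi>\<^sup>* \<beta>\<close>, and cancelling \<open>\<xi>\<^sup>* \<noteq> 0\<close> in the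
  division ring \<open>\<bbbH>\<close> gives \<open>\<beta> = \<eta> x\<close>. The case \<open>\<xi> = 0\<close> reduces to this one by
  swapping the two components, which only changes the sign of the bracket.
\<close>

lemma quat_eq_iff:
  "p = q \<longleftrightarrow> qRe p = qRe q \<and> qI p = qI q \<and> qJ p = qJ q \<and> qK p = qK q"
  by (cases p; cases q) auto

definition qnormsq :: "quat \<Rightarrow> real" where
  "qnormsq q = qRe q ^ 2 + qI q ^ 2 + qJ q ^ 2 + qK q ^ 2"

lemma qnormsq_eq_0_iff: "qnormsq q = 0 \<longleftrightarrow> q = 0"
  by (cases q) (auto simp: qnormsq_def zero_quat_def add_nonneg_eq_0_iff)

instantiation quat :: "{one, inverse}"
begin

definition "1 = Quat 1 0 0 0"

definition "inverse q =
  Quat (qRe q / qnormsq q) (- qI q / qnormsq q) (- qJ q / qnormsq q) (- qK q / qnormsq q)"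

definition divide_quat :: "quat \<Rightarrow> quat \<Rightarrow> quat" where
  "divide_quat p q = p * inverse q"

instance ..

end

instance quat :: division_ring
proof
  fix p q r :: quat
  show "p + q + r = p + (q + r)" "p + q = q + p" "0 + p = p" "- p + p = 0" "p - q = p + - q"
    by (simp_all add: quat_eq_iff plus_quat_def zero_quat_def uminus_quat_def minus_quat_def)
  show "p * q * r = p * (q * r)" "(p + q) * r = p * r + q * r" "p * (q + r) = p * q + p * r"
    by (simp_all add: quat_eq_iff times_quat_def plus_quat_def algebra_simps)
  show "1 * p = p" "p * 1 = p" "(0::quat) \<noteq> 1"
    by (simp_all add: quat_eq_iff times_quat_def one_quat_def zero_quat_def)
  show "inverse (0::quat) = 0" "p / q = p * inverse q"
    by (simp_all add: inverse_quat_def divide_quat_def zero_quat_def qnormsq_def)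
  assume "p \<noteq> 0"
  then have "qnormsq p \<noteq> 0"
    by (simp add: qnormsq_eq_0_iff)
  then show "inverse p * p = 1" "p * inverse p = 1"
    by (simp_all add: quat_eq_iff times_quat_def inverse_quat_def one_quat_def field_simps)
      (simp_all add: qnormsq_def power2_eq_square)
qed

lemma qstar_eq_0_iff [simp]: "qstar q = 0 \<longleftrightarrow> q = 0"
  by (simp add: qstar_def quat_eq_iff zero_quat_def)

lemma bracket_self_eq_0_iff: "bracket \<kappa> \<kappa> = 0 \<longleftrightarrow> fst \<kappa> * qcnj (snd \<kappa>) \<in> qV"
  by (cases \<kappa>)
    (auto simp: bracket_def qV_def quat_eq_iff times_quat_def minus_quat_def zero_quat_def
      qstar_def qcnj_def algebra_simps)

lemma bracket_rmult_right: "bracket \<kappa> (rmult \<kappa> x) = bracket \<kappa> \<kappa> * x"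
  by (simp add: bracket_def rmult_def mult.assoc left_diff_distrib)

lemma bracket_swap: "bracket (prod.swap \<kappa>) (prod.swap \<nu>) = - bracket \<kappa> \<nu>"
  by (simp add: bracket_def)

lemma rmult_swap: "rmult (prod.swap \<kappa>) x = prod.swap (rmult \<kappa> x)"
  by (simp add: rmult_def)

lemma bracket_eq_0_imp_rmult_of_fst_nonzero:
  assumes "bracket \<kappa> \<kappa> = 0" and "bracket \<kappa> \<nu> = 0" and "fst \<kappa> \<noteq> 0"
  shows "\<exists>x. \<nu> = rmult \<kappa> x"
proof -
  obtain \<xi> \<eta> \<alpha> \<beta> where \<kappa>: "\<kappa> = (\<xi>, \<eta>)" and \<nu>: "\<nu> = (\<alpha>, \<beta>)"
    by fastforce
  have commute: "qstar \<xi> * \<eta> = qstar \<eta> * \<xi>" and bracket: "qstar \<xi> * \<beta> = qstar \<eta> * \<alpha>"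
    using assms(1,2) by (simp_all add: \<kappa> \<nu> bracket_def)
  define x where "x = inverse \<xi> * \<alpha>"
  have \<alpha>: "\<alpha> = \<xi> * x"
    using assms(3) by (simp add: \<kappa> x_def mult.assoc [symmetric])
  have "qstar \<xi> * (\<eta> * x) = qstar \<xi> * \<beta>"
    by (simp add: mult.assoc [symmetric] commute bracket) (simp add: mult.assoc \<alpha>)
  then have "\<beta> = \<eta> * x"
    using assms(3) by (simp add: \<kappa>)
  with \<alpha> show ?thesis
    by (auto simp: \<nu> \<kappa> rmult_def)
qed

lemma bracket_eq_0_imp_rmult:
  assumes "bracket \<kappa> \<kappa> = 0" and "bracket \<kappa> \<nu> = 0" and "\<kappa> \<noteq> (0, 0)"
  shows "\<exists>x. \<nu> = rmult \<kappa> x"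
proof (cases "fst \<kappa> = 0")
  case False
  with assms(1,2) show ?thesis
    by (rule bracket_eq_0_imp_rmult_of_fst_nonzero)
next
  case True
  with assms(3) have "fst (prod.swap \<kappa>) \<noteq> 0"
    by (cases \<kappa>) auto
  moreover have "bracket (prod.swap \<kappa>) (prod.swap \<kappa>) = 0"
    and "bracket (prod.swap \<kappa>) (prod.swap \<nu>) = 0"
    using assms(1,2) by (simp_all add: bracket_swap)
  ultimately obtain x where "prod.swap \<nu> = prod.swap (rmult \<kappa> x)"
    using bracket_eq_0_imp_rmult_of_fst_nonzero by (metis rmult_swap)
  then show ?thesis
    by (metis swap_swap)
qed

theorem lemma3p5:
  fixes \<kappa> \<nu> :: "quat \<times> quat"
  assumes "\<kappa> \<in> SH"
  shows "bracket \<kappa> \<nu> = 0 \<longleftrightarrow> (\<exists>x. \<nu> = rmult \<kappa> x)"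
proof -
  have self: "bracket \<kappa> \<kappa> = 0" and nonzero: "\<kappa> \<noteq> (0, 0)"
    using assms by (auto simp: SH_def bracket_self_eq_0_iff)
  show ?thesis
  proof
    assume "bracket \<kappa> \<nu> = 0"
    with self nonzero show "\<exists>x. \<nu> = rmult \<kappa> x"
      using bracket_eq_0_imp_rmult by blast
  next
    assume "\<exists>x. \<nu> = rmult \<kappa> x"
    with self show "bracket \<kappa> \<nu> = 0"
      by (auto simp: bracket_rmult_right)
  qed
qed

end
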